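(* Consider the early contracting game with fully informative grading in which every school has student abilities uniformly distributed on $[0,1]$. At any equilibrium, the set of jobs that contract early is an interval of job qualities $[b,c]$, and the set of abilities that these jobs receive under the truthful mapping $Q_T$ is an interval $[a,1-a]$ symmetric around $1/2$.
   Context: Students form a continuum of unit mass; every school (a continuum of infinitesimal schools) has student abilities uniformly distributed on $[0,1]$, so every school has average ability $1/2$. Jobs form a continuum of unit mass with qualities in $[0,1]$, continuous CDF $\mu$ with positive density. $Q_T$ is the nondecreasing assortative map: students with ability at most $a$ get exactly the jobs of quality at most $Q_T(a)$. Grading is fully informative (each student's label is their true ability). Agents are risk neutral. Early contracting game: in stage 1 a job may contract with a uniformly random student of a school (expected ability $1/2$); in stage 2 remaining students are matched to remaining jobs assortatively by true ability, via an increasing map $\hat Q$. Equilibrium: (1) a stage-1 contract between a school of average $\hat a$ and job $q$ requires $\hat Q^{-1}(q)\le\hat a$ and that the school's remaining students' average stage-2 quality be at most $q$; (2) there is no school of average $\hat a$ with stage-2 students and job $q$ with $\hat Q^{-1}(q)<\hat a$ such that the school's average stage-2 quality is below $q$; (3) among stage-1 jobs, better jobs go to schools of no lower average ability. *)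

theory Defs
  imports "HOL-Analysis.Analysis"
begin

text \<open>Jobs: qualities in [0,1] with positive density f; the job CDF is
  mu(q) = jobmass f {0..q}.  Students: every school has abilities uniform on [0,1],
  hence every school has average ability 1/2.\<close>

definition jobmass :: "(real \<Rightarrow> real) \<Rightarrow> real set \<Rightarrow> real" where
  "jobmass f A = (LINT q:A|lborel. f q)"

text \<open>Truthful assortative map Q_T: students with ability at most a get exactly
  the jobs of quality at most Q_T a, i.e. mu (Q_T a) = a.\<close>
definition QT :: "(real \<Rightarrow> real) \<Rightarrow> real \<Rightarrow> real" where
  "QT f a = (THE q. q \<in> {0..1} \<and> jobmass f {0..q} = a)"

text \<open>Stage-2 ability rank of job q (the value of the inverse of the stage-2
  assortative map): mass of stage-2 jobs of quality at most q, divided by the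
  mass of stage-2 students (which are uniformly distributed on [0,1]).\<close>
definition stage2_rank :: "(real \<Rightarrow> real) \<Rightarrow> real set \<Rightarrow> real \<Rightarrow> real" where
  "stage2_rank f E q = jobmass f ({0..q} - E) / (1 - jobmass f E)"

text \<open>Average stage-2 job quality of a school's remaining students (which are
  still uniform on [0,1], since stage-1 students are drawn uniformly at random).\<close>
definition stage2_avg :: "(real \<Rightarrow> real) \<Rightarrow> real" where
  "stage2_avg Qh = (LINT a:{0..1}|lborel. Qh a)"

text \<open>Equilibrium of the early contracting game: E is the set of job qualities
  contracting in stage 1, Qh the increasing stage-2 assortative map.  All schools
  have average ability 1/2, so condition (3) is vacuous.\<close>
definition early_equilibrium ::
  "(real \<Rightarrow> real) \<Rightarrow> real set \<Rightarrow> (real \<Rightarrow> real) \<Rightarrow> bool" where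
  "early_equilibrium f E Qh \<longleftrightarrow>
     E \<subseteq> {0..1} \<and> E \<in> sets lborel \<and>
     mono_on {0..1} Qh \<and> Qh ` {0..1} \<subseteq> {0..1} \<and>
     (\<forall>a\<in>{0..1}. (1 - jobmass f E) * a = jobmass f ({0..Qh a} - E)) \<and>
     (\<forall>q\<in>E. stage2_rank f E q \<le> 1/2 \<and> stage2_avg Qh \<le> q) \<and>
     (jobmass f E < 1 \<longrightarrow>
        (\<forall>q\<in>{0..1} - E. \<not> (stage2_rank f E q < 1/2 \<and> stage2_avg Qh < q)))"

end

theory Submission
  imports Defs
begin

text \<open>Let m be the mass of the early jobs and L(q) the mass of late jobs of
  quality at most q, so a job's stage-2 rank is L(q)/(1 - m).  Condition (1)
  confines the early jobs to [A, c], where A is the average stage-2 quality and c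
  the largest quality with L(c) = (1 - m)/2; condition (2) says that every late job
  above A in this window also has L(q) = (1 - m)/2, so the late jobs inside the
  window carry no mass.  Thus the early jobs fill [b, c] up to a null set, and the
  jobs below b and above c both have mass (1 - m)/2.  As Q_T is the quantile map
  of the job distribution, it pulls [b, c] back to [a, 1 - a] with a = (1 - m)/2.\<close>

lemma continuous_on_level_set_extremes:
  fixes g :: "real \<Rightarrow> real"
  assumes g: "continuous_on {x..y} g" and "x \<le> y" "g x \<le> h" "h \<le> g y"
  obtains lo hi where "lo \<in> {x..y}" "hi \<in> {x..y}" "g lo = h" "g hi = h"
    "\<And>q. q \<in> {x..y} \<Longrightarrow> g q = h \<Longrightarrow> lo \<le> q \<and> q \<le> hi"
proof -
  define L where "L = {q \<in> {x..y}. g q = h}"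
  have "closed L"
    unfolding L_def by (rule continuous_closed_preimage_constant[OF g closed_atLeastAtMost])
  moreover have "L \<noteq> {}"
    using IVT'[of g x h y] assms unfolding L_def by auto
  moreover have "bdd_above L" "bdd_below L"
    unfolding L_def by (auto intro: bdd_aboveI[of _ y] bdd_belowI[of _ x])
  ultimately have "Inf L \<in> L" "Sup L \<in> L" "\<forall>q\<in>L. Inf L \<le> q \<and> q \<le> Sup L"
    by (simp_all add: closed_contains_Inf closed_contains_Sup cInf_lower cSup_upper)
  then show ?thesis using that[of "Inf L" "Sup L"] unfolding L_def by blast
qed

locale job_density =
  fixes f :: "real \<Rightarrow> real"
  assumes pos: "\<forall>q\<in>{0..1}. f q > 0"
    and integrable: "set_integrable lborel {0..1} f"
begin

lemma set_integrable_subset_unit: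
  "S \<in> sets lborel \<Longrightarrow> S \<subseteq> {0..1} \<Longrightarrow> set_integrable lborel S f"
  using set_integrable_subset[OF integrable] by blast

lemma jobmass_nonneg: "S \<subseteq> {0..1} \<Longrightarrow> 0 \<le> jobmass f S"
  unfolding jobmass_def set_lebesgue_integral_def
  by (rule integral_nonneg_AE, rule AE_I2) (use pos in \<open>auto simp: indicator_def less_imp_le\<close>)

lemma jobmass_Un:
  assumes "A \<in> sets lborel" "B \<in> sets lborel" "A \<subseteq> {0..1}" "B \<subseteq> {0..1}" "A \<inter> B = {}"
  shows "jobmass f (A \<union> B) = jobmass f A + jobmass f B"
  unfolding jobmass_def
  by (rule set_integral_Un) (use assms set_integrable_subset_unit in auto)

lemma jobmass_Diff_subset:
  assumes "S \<in> sets lborel" "T \<in> sets lborel" "S \<subseteq> T" "T \<subseteq> {0..1}"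
  shows "jobmass f (T - S) = jobmass f T - jobmass f S"
proof -
  have "jobmass f (S \<union> (T - S)) = jobmass f S + jobmass f (T - S)"
    using assms by (intro jobmass_Un) auto
  moreover have "S \<union> (T - S) = T" using assms by auto
  ultimately show ?thesis by simp
qed

lemma jobmass_mono:
  assumes "S \<in> sets lborel" "T \<in> sets lborel" "S \<subseteq> T" "T \<subseteq> {0..1}"
  shows "jobmass f S \<le> jobmass f T"
  using jobmass_Diff_subset[OF assms] jobmass_nonneg[of "T - S"] assms by auto

lemma jobmass_null:
  assumes "S \<in> null_sets lborel" shows "jobmass f S = 0"
  unfolding jobmass_def set_lebesgue_integral_def
  by (rule integral_eq_zero_AE) (use AE_not_in[OF assms] in \<open>auto elim!: eventually_mono\<close>)

lemma jobmass_finite: "finite S \<Longrightarrow> jobmass f S = 0"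
  using jobmass_null finite_imp_null_set_lborel by blast

lemma jobmass_mono_finite_exception:
  assumes "S \<in> sets lborel" "T \<in> sets lborel" "finite N" "S \<subseteq> T \<union> N"
    "T \<subseteq> {0..1}" "N \<subseteq> {0..1}"
  shows "jobmass f S \<le> jobmass f T"
proof -
  have N: "N - T \<in> sets lborel"
    using assms(3) finite_imp_null_set_lborel null_setsD2 by blast
  then have "T \<union> (N - T) \<in> sets lborel" using assms(2) by blast
  then have "jobmass f S \<le> jobmass f (T \<union> (N - T))"
    using assms by (intro jobmass_mono) auto
  also have "\<dots> = jobmass f T + jobmass f (N - T)"
    using assms N by (intro jobmass_Un) auto
  also have "jobmass f (N - T) = 0"
    using assms by (intro jobmass_finite) auto
  finally show ?thesis by simp
qed

lemma jobmass_atLeastAtMost_pos: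
  assumes "0 \<le> x" "x < y" "y \<le> 1"
  shows "jobmass f {x..y} > 0"
proof (rule ccontr)
  let ?F = "\<lambda>z. indicator {x..y} z *\<^sub>R f z"
  assume "\<not> jobmass f {x..y} > 0"
  with jobmass_nonneg[of "{x..y}"] assms have "jobmass f {x..y} = 0" by auto
  moreover have "integrable lborel ?F"
    using set_integrable_subset_unit[of "{x..y}"] assms unfolding set_integrable_def by auto
  moreover have "AE z in lborel. 0 \<le> ?F z"
    by (rule AE_I2) (use assms pos in \<open>auto simp: indicator_def less_imp_le\<close>)
  ultimately have "AE z in lborel. ?F z = 0"
    using integral_nonneg_eq_0_iff_AE unfolding jobmass_def set_lebesgue_integral_def by blast
  then have "AE z in lborel. z \<notin> {x..y}"
  proof (rule eventually_mono)
    fix z assume F: "?F z = 0"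
    show "z \<notin> {x..y}"
    proof
      assume z: "z \<in> {x..y}"
      then have "f z > 0" using pos assms by auto
      then show False using F z by simp
    qed
  qed
  moreover have "{z \<in> space lborel. \<not> z \<notin> {x..y}} = {x..y}" by auto
  ultimately have "emeasure lborel {x..y} = 0"
    using AE_iff_measurable[of "{x..y}" lborel "\<lambda>z. z \<notin> {x..y}"] by simp
  then show False using assms by simp
qed

lemma jobmass_atLeastAtMost:
  assumes "0 \<le> x" "x \<le> y" "y \<le> 1"
  shows "jobmass f {x..y} = jobmass f {0..y} - jobmass f {0..x}"
proof -
  have "{0..y} - {0..x} = {x<..y}" using assms by auto
  then have "jobmass f {x<..y} = jobmass f {0..y} - jobmass f {0..x}"
    using jobmass_Diff_subset[of "{0..x}" "{0..y}"] assms by simp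
  moreover have "jobmass f {x<..y} \<le> jobmass f {x..y}"
    using assms by (intro jobmass_mono) auto
  moreover have "jobmass f {x..y} \<le> jobmass f {x<..y}"
    using assms by (intro jobmass_mono_finite_exception[where N = "{x}"]) auto
  ultimately show ?thesis by linarith
qed

lemma jobmass_atMost_strict_mono:
  assumes "0 \<le> x" "x < y" "y \<le> 1"
  shows "jobmass f {0..x} < jobmass f {0..y}"
  using jobmass_atLeastAtMost_pos[OF assms] jobmass_atLeastAtMost[of x y] assms by simp

lemma jobmass_atMost_le_iff:
  assumes "x \<in> {0..1}" "y \<in> {0..1}"
  shows "jobmass f {0..x} \<le> jobmass f {0..y} \<longleftrightarrow> x \<le> y"
  using jobmass_atMost_strict_mono[of x y] jobmass_atMost_strict_mono[of y x] assms
  by (cases x y rule: linorder_cases) auto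

lemma continuous_on_jobmass_atMost_Diff:
  assumes E: "E \<in> sets lborel"
  shows "continuous_on {0..1} (\<lambda>q. jobmass f ({0..q} - E))"
proof -
  define g where "g = (\<lambda>z. indicator (- E) z * f z)"
  have g_integrable: "set_integrable lborel S g" if "S \<in> sets lborel" "S \<subseteq> {0..1}" for S
  proof -
    have "(\<lambda>z. indicator S z *\<^sub>R g z) = (\<lambda>z. indicator (S - E) z *\<^sub>R f z)"
      by (auto simp: g_def indicator_def fun_eq_iff)
    then show ?thesis
      using set_integrable_subset_unit[of "S - E"] that E unfolding set_integrable_def by auto
  qed
  have "g integrable_on {0..1}"
    using set_borel_integral_eq_integral(1)[OF g_integrable[of "{0..1}"]] by auto
  then have "continuous_on {0..1} (\<lambda>q. integral {0..q} g)"
    by (rule indefinite_integral_continuous_1)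
  moreover have "integral {0..q} g = jobmass f ({0..q} - E)" if "q \<in> {0..1}" for q
  proof -
    have "jobmass f ({0..q} - E) = (LINT z:{0..q}|lborel. g z)"
      unfolding jobmass_def set_lebesgue_integral_def g_def
      by (rule Bochner_Integration.integral_cong) (auto simp: indicator_def)
    then show ?thesis
      using set_borel_integral_eq_integral(2)[OF g_integrable[of "{0..q}"]] that by auto
  qed
  ultimately show ?thesis by (rule continuous_on_eq)
qed

end

locale job_distribution = job_density +
  assumes total: "jobmass f {0..1} = 1"
begin

lemma QT_quantile:
  assumes "x \<in> {0..1}"
  shows "QT f x \<in> {0..1}" "jobmass f {0..QT f x} = x"
proof -
  have "continuous_on {0..1} (\<lambda>q. jobmass f {0..q})"
    using continuous_on_jobmass_atMost_Diff[of "{}"] by simp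
  moreover have "jobmass f {0..0} = 0" by (intro jobmass_finite) auto
  ultimately obtain q where q: "q \<in> {0..1}" "jobmass f {0..q} = x"
    using IVT'[of "\<lambda>q. jobmass f {0..q}" 0 x 1] total assms by auto
  have "\<exists>!q. q \<in> {0..1} \<and> jobmass f {0..q} = x"
  proof (rule ex1I[of _ q])
    fix r assume "r \<in> {0..1} \<and> jobmass f {0..r} = x"
    then show "r = q" using q jobmass_atMost_le_iff[of r q] jobmass_atMost_le_iff[of q r] by auto
  qed (use q in auto)
  then have "QT f x \<in> {0..1} \<and> jobmass f {0..QT f x} = x"
    unfolding QT_def by (rule theI')
  then show "QT f x \<in> {0..1}" "jobmass f {0..QT f x} = x" by auto
qed

lemma QT_preimage_atLeastAtMost:
  assumes "0 \<le> b" "b \<le> c" "c \<le> 1"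
  shows "{x\<in>{0..1}. QT f x \<in> {b..c}} = {jobmass f {0..b}..jobmass f {0..c}}"
proof -
  have bounds: "jobmass f {0..b} \<ge> 0" "jobmass f {0..c} \<le> 1"
    using jobmass_nonneg[of "{0..b}"] jobmass_mono[of "{0..c}" "{0..1}"] total assms by auto
  show ?thesis
  proof (intro equalityI subsetI)
    fix x assume "x \<in> {x\<in>{0..1}. QT f x \<in> {b..c}}"
    then show "x \<in> {jobmass f {0..b}..jobmass f {0..c}}"
      using QT_quantile[of x] jobmass_atMost_le_iff[of b "QT f x"]
        jobmass_atMost_le_iff[of "QT f x" c] assms by auto
  next
    fix x assume "x \<in> {jobmass f {0..b}..jobmass f {0..c}}"
    then show "x \<in> {x\<in>{0..1}. QT f x \<in> {b..c}}"
      using QT_quantile[of x] jobmass_atMost_le_iff[of b "QT f x"]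
        jobmass_atMost_le_iff[of "QT f x" c] assms bounds by auto
  qed
qed

end

locale early_contracting_equilibrium = job_distribution f for f +
  fixes E :: "real set" and Qh :: "real \<Rightarrow> real"
  assumes equilibrium: "early_equilibrium f E Qh"
begin

lemma early_jobs_subset: "E \<subseteq> {0..1}" and early_jobs_sets: "E \<in> sets lborel"
  using equilibrium unfolding early_equilibrium_def by auto

definition late_mass :: "real \<Rightarrow> real" where
  "late_mass q = jobmass f ({0..q} - E)"

lemma late_mass_0: "late_mass 0 = 0"
proof -
  have "finite ({0..0::real} - E)" by (rule finite_subset[of _ "{0}"]) auto
  then show ?thesis unfolding late_mass_def by (rule jobmass_finite)
qed

lemma late_mass_1: "late_mass 1 = 1 - jobmass f E"
  unfolding late_mass_def using jobmass_Diff_subset[of E "{0..1}"] total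
    early_jobs_subset early_jobs_sets by simp

lemma late_mass_mono: "x \<le> y \<Longrightarrow> y \<le> 1 \<Longrightarrow> late_mass x \<le> late_mass y"
  unfolding late_mass_def using early_jobs_sets by (intro jobmass_mono) auto

lemma jobmass_late_greaterThanAtMost:
  assumes "0 \<le> x" "x \<le> y" "y \<le> 1"
  shows "jobmass f ({x<..y} - E) = late_mass y - late_mass x"
proof -
  have "jobmass f (({0..y} - E) - ({0..x} - E)) = late_mass y - late_mass x"
    unfolding late_mass_def using early_jobs_sets assms
    by (intro jobmass_Diff_subset) auto
  moreover have "({0..y} - E) - ({0..x} - E) = {x<..y} - E" using assms by auto
  ultimately show ?thesis by simp
qed

lemma stage2_rank_eq: "stage2_rank f E q = late_mass q / (1 - jobmass f E)"
  unfolding stage2_rank_def late_mass_def ..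

lemma early_job_conditions:
  assumes "jobmass f E < 1" "q \<in> E"
  shows "stage2_avg Qh \<le> q" "late_mass q \<le> (1 - jobmass f E) / 2"
proof -
  have "stage2_rank f E q \<le> 1/2" "stage2_avg Qh \<le> q"
    using equilibrium assms(2) unfolding early_equilibrium_def by auto
  then show "stage2_avg Qh \<le> q" "late_mass q \<le> (1 - jobmass f E) / 2"
    using assms(1) by (simp_all add: stage2_rank_eq field_simps)
qed

lemma late_job_condition:
  assumes "jobmass f E < 1" "q \<in> {0..1} - E" "stage2_avg Qh < q"
  shows "(1 - jobmass f E) / 2 \<le> late_mass q"
proof -
  have "\<not> stage2_rank f E q < 1/2"
    using equilibrium assms unfolding early_equilibrium_def by auto
  then show ?thesis using assms(1) by (simp add: stage2_rank_eq field_simps)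
qed

lemma early_jobs_fill_window:
  assumes "0 < jobmass f E" "jobmass f E < 1"
  obtains b c where "0 \<le> b" "b \<le> c" "c \<le> 1" "E \<subseteq> {b..c}"
    "jobmass f ({b..c} - E) = 0" "late_mass c = (1 - jobmass f E) / 2"
proof -
  define h where "h = (1 - jobmass f E) / 2"
  define A where "A = stage2_avg Qh"
  have "continuous_on {0..1} late_mass"
    unfolding late_mass_def by (rule continuous_on_jobmass_atMost_Diff[OF early_jobs_sets])
  moreover have "late_mass 0 \<le> h" "h \<le> late_mass 1"
    using late_mass_0 late_mass_1 assms unfolding h_def by auto
  ultimately obtain lo c where lo: "lo \<in> {0..1}" and c: "c \<in> {0..1}"
    and levels: "late_mass lo = h" "late_mass c = h"
    and level: "\<And>q. q \<in> {0..1} \<Longrightarrow> late_mass q = h \<Longrightarrow> lo \<le> q \<and> q \<le> c"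
    by (rule continuous_on_level_set_extremes[OF _ zero_le_one]) blast
  have early: "A \<le> q \<and> q \<le> c" if "q \<in> E" for q
  proof -
    have "q \<in> {0..1}" "late_mass q \<le> h" "A \<le> q"
      using that early_jobs_subset early_job_conditions[OF assms(2)] unfolding h_def A_def by auto
    moreover have "q \<le> c"
    proof (rule ccontr)
      assume "\<not> q \<le> c"
      then have "late_mass q = h"
        using late_mass_mono[of c q] c levels \<open>late_mass q \<le> h\<close> \<open>q \<in> {0..1}\<close> by auto
      then show False using level \<open>q \<in> {0..1}\<close> \<open>\<not> q \<le> c\<close> by blast
    qed
    ultimately show ?thesis by auto
  qed
  define b where "b = max A 0"
  obtain e where "e \<in> E" using assms(1) jobmass_finite[of "{}"] by fastforce
  then have bc: "0 \<le> b" "b \<le> c" using early[of e] c unfolding b_def by auto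
  have window: "E \<subseteq> {b..c}" using early early_jobs_subset unfolding b_def by force
  have late_gap: "{b..c} - E \<subseteq> ({lo<..c} - E) \<union> {b, lo}"
  proof
    fix q assume q: "q \<in> {b..c} - E"
    show "q \<in> ({lo<..c} - E) \<union> {b, lo}"
    proof (cases "q = b")
      case False
      then have "A < q" "q \<in> {0..1} - E" using q bc c unfolding b_def by auto
      then have "h \<le> late_mass q" using late_job_condition[OF assms(2)] unfolding h_def A_def by auto
      moreover have "late_mass q \<le> h" using late_mass_mono[of q c] q c levels by auto
      ultimately have "lo \<le> q" using level \<open>q \<in> {0..1} - E\<close> by auto
      then show ?thesis using q by auto
    qed simp
  qed
  have "jobmass f ({b..c} - E) \<le> jobmass f ({lo<..c} - E)"
    using late_gap early_jobs_sets bc c lo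
    by (intro jobmass_mono_finite_exception[where N = "{b, lo}"]) auto
  also have "\<dots> = 0"
    using jobmass_late_greaterThanAtMost[of lo c] level[OF lo] c lo levels by auto
  finally have "jobmass f ({b..c} - E) = 0"
    using jobmass_nonneg[of "{b..c} - E"] bc c by force
  then show ?thesis using that bc c window levels unfolding h_def by auto
qed

lemma early_jobs_window:
  obtains b c where "0 \<le> b" "b \<le> c" "c \<le> 1"
    "jobmass f (E - {b..c}) = 0" "jobmass f ({b..c} - E) = 0"
    "jobmass f {0..b} + jobmass f {0..c} = 1"
proof -
  have "0 \<le> jobmass f E" "jobmass f E \<le> 1"
    using jobmass_nonneg[OF early_jobs_subset] late_mass_1
      jobmass_nonneg[of "{0..1} - E"] unfolding late_mass_def by auto
  \<comment> \<open>If m = 1 the stage-2 ranks are 0 (division by zero) and the conditions say nothing;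
    if m = 0 the set E may be empty.\<close>
  then consider "jobmass f E = 1" | "jobmass f E = 0" | "0 < jobmass f E \<and> jobmass f E < 1"
    by linarith
  then show ?thesis
  proof cases
    case 1
    then have "jobmass f ({0..1} - E) = 0" using late_mass_1 unfolding late_mass_def by simp
    moreover have "jobmass f (E - {0..1}) = 0" "jobmass f {0..0} = 0"
      using early_jobs_subset jobmass_finite[of "{}"] jobmass_finite[of "{0}"]
      by (simp_all add: Diff_eq_empty_iff[THEN iffD2])
    ultimately show ?thesis using that[of 0 1] total by simp
  next
    case 2
    define b where "b = QT f (1/2)"
    have b: "b \<in> {0..1}" "jobmass f {0..b} = 1/2" using QT_quantile[of "1/2"] unfolding b_def by auto
    have "jobmass f (E - {b..b}) \<le> jobmass f E"
      using early_jobs_subset early_jobs_sets by (intro jobmass_mono) auto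
    moreover have "0 \<le> jobmass f (E - {b..b})" using early_jobs_subset by (intro jobmass_nonneg) auto
    moreover have "jobmass f ({b..b} - E) = 0" by (intro jobmass_finite) auto
    ultimately show ?thesis using that[of b b] b 2 by auto
  next
    case 3
    then obtain b c where bc: "0 \<le> b" "b \<le> c" "c \<le> 1" and window: "E \<subseteq> {b..c}"
      and gap: "jobmass f ({b..c} - E) = 0" and top: "late_mass c = (1 - jobmass f E) / 2"
      using early_jobs_fill_window by blast
    have "jobmass f {b..c} = jobmass f E"
      using jobmass_Diff_subset[of E "{b..c}"] window gap early_jobs_sets bc by auto
    moreover have "late_mass c = jobmass f {0..c} - jobmass f E"
      unfolding late_mass_def using early_jobs_sets window bc
      by (intro jobmass_Diff_subset) auto
    moreover have "jobmass f (E - {b..c}) = 0"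
      using window jobmass_finite[of "{}"] by (simp add: Diff_eq_empty_iff[THEN iffD2])
    ultimately show ?thesis
      using that[of b c] bc gap top jobmass_atLeastAtMost[of b c] by auto
  qed
qed

end

theorem mainTheorem11:
  fixes f :: "real \<Rightarrow> real" and E :: "real set" and Qh :: "real \<Rightarrow> real"
  assumes fpos: "\<forall>q\<in>{0..1}. f q > 0"
    and fint: "set_integrable lborel {0..1} f"
    and ftot: "jobmass f {0..1} = 1"
    and eq: "early_equilibrium f E Qh"
  shows "\<exists>a b c. 0 \<le> b \<and> b \<le> c \<and> c \<le> 1 \<and>
           jobmass f (E - {b..c}) = 0 \<and> jobmass f ({b..c} - E) = 0 \<and>
           0 \<le> a \<and> a \<le> 1/2 \<and>
           {x\<in>{0..1}. QT f x \<in> {b..c}} = {a..1-a}"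
proof -
  interpret early_contracting_equilibrium f E Qh
    using fpos fint ftot eq by unfold_locales auto
  obtain b c where bc: "0 \<le> b" "b \<le> c" "c \<le> 1"
    and null: "jobmass f (E - {b..c}) = 0" "jobmass f ({b..c} - E) = 0"
    and sym: "jobmass f {0..b} + jobmass f {0..c} = 1"
    by (rule early_jobs_window)
  define a where "a = jobmass f {0..b}"
  have "0 \<le> a" "a \<le> jobmass f {0..c}"
    using jobmass_nonneg[of "{0..b}"] jobmass_atMost_le_iff[of b c] bc unfolding a_def by auto
  moreover have "{x\<in>{0..1}. QT f x \<in> {b..c}} = {a..1-a}"
    using QT_preimage_atLeastAtMost[OF bc] sym unfolding a_def by (simp add: eq_diff_eq)
  ultimately show ?thesis using bc null sym unfolding a_def by fastforce
qed

end
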